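(* Let $\mathcal V=\{v^{(1)},\dots,v^{(p)}\}\subset(\mathbb{R}\cup\{-\infty\})^n$, none identically $-\infty$, and let $V$ be the matrix with columns $v^{(k)}$, with no row identically $-\infty$. Let $T$ be the operator $$T_i(x)=\inf_{k\in[p],\,V_{ik}\neq-\infty}\Big[-V_{ik}+\max_{j\in[n],\,j\neq i}(V_{jk}+x_j)\Big],\qquad i\in[n].$$ Let $a\in\mathbb{R}^n$. The following are equivalent: (1) $T(a)=\rho(T)+a$; (2) for every $i\in[n]$ there exists $k\in[p]$ such that $v^{(k)}\in S_i(a)$ and $\operatorname{dist}_H(v^{(k)},\mathcal H_a)=\operatorname{dist}_H(\mathcal V,\mathcal H_a)$. Moreover, if these assertions hold, then $\rho(T)=-\operatorname{dist}_H(\mathcal V,\mathcal H_a)$, $\mathcal H_a$ is an optimal solution of the problem $\min_b\operatorname{dist}_H(\mathcal V,\mathcal H_b)$, and $B(-a,\operatorname{dist}_H(\mathcal V,\mathcal H_a))$ is a Hilbert ball of maximal radius among Hilbert balls centered in $\mathbb{R}^n$ included in $\operatorname{Span}(\mathcal V)$.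
   Context: $\mathbb{R}_{\max}=\mathbb{R}\cup\{-\infty\}$, $-\infty+c=-\infty$, $\max\emptyset=-\infty$. $\mathcal H_a=\{y\in\mathbb{R}_{\max}^n:\max_i(a_i+y_i)\text{ is achieved at least twice}\}$; for $a\in\mathbb{R}^n$, the sectors are $S_i(a)=\{x\in\mathbb{R}_{\max}^n: x_i+a_i\ge x_j+a_j\ \forall j\in[n]\}$. Hilbert's projective metric $d(x,y)=\inf\{\lambda-\mu:\lambda,\mu\in\mathbb{R},\ \mu+y_j\le x_j\le\lambda+y_j\ \forall j\}$; $B(c,r)=\{x:d(c,x)\le r\}$; $\operatorname{dist}_H(x,B)=\inf_{y\in B}d(x,y)$, $\operatorname{dist}_H(A,B)=\sup_{x\in A}\operatorname{dist}_H(x,B)$. $\operatorname{Span}(\mathcal V)$ is the tropical cone generated by $\mathcal V$ (entrywise maxima of vectors $\alpha+v$, $v\in\mathcal V$, $\alpha\in\mathbb{R}_{\max}$). The minimum $\min_b$ is over $b\in\mathbb{R}_{\max}^n$ not identically $-\infty$. $\rho(T)=\sup\{\lambda\in\mathbb{R}\cup\{-\infty\}:\exists u\not\equiv-\infty,\ T(u)=\lambda+u\}$. *)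

theory Defs
  imports "HOL-Analysis.Analysis" "HOL-Library.Extended_Real"
begin

text \<open>Vectors over R_max = R \<union> {-\<infinity>}, indexed by a finite type 'n, are modelled as
  functions 'n \<Rightarrow> ereal that never take the value +\<infinity>.\<close>

definition rmax :: "('n \<Rightarrow> ereal) set" where
  "rmax = {x. \<forall>i. x i \<noteq> \<infinity>}"

definition tropH :: "('n::finite \<Rightarrow> ereal) \<Rightarrow> ('n \<Rightarrow> ereal) set" where
  "tropH a = {y \<in> rmax. \<exists>i j. i \<noteq> j \<and> a i + y i = (SUP k. a k + y k)
                                   \<and> a j + y j = (SUP k. a k + y k)}"

definition sector :: "'n \<Rightarrow> ('n \<Rightarrow> real) \<Rightarrow> ('n \<Rightarrow> ereal) set" where
  "sector i a = {x \<in> rmax. \<forall>j. x i + ereal (a i) \<ge> x j + ereal (a j)}"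

text \<open>Hilbert's projective metric (values in ereal; inf of the empty set is +\<infinity>).\<close>
definition hilbert_d :: "('n \<Rightarrow> ereal) \<Rightarrow> ('n \<Rightarrow> ereal) \<Rightarrow> ereal" where
  "hilbert_d x y = Inf {ereal (l - m) | l m.
      \<forall>j. ereal m + y j \<le> x j \<and> x j \<le> ereal l + y j}"

definition hball :: "('n \<Rightarrow> real) \<Rightarrow> ereal \<Rightarrow> ('n \<Rightarrow> ereal) set" where
  "hball c r = {x \<in> rmax. hilbert_d (\<lambda>i. ereal (c i)) x \<le> r}"

definition dist_pt :: "('n \<Rightarrow> ereal) \<Rightarrow> ('n \<Rightarrow> ereal) set \<Rightarrow> ereal" where
  "dist_pt x B = (INF y\<in>B. hilbert_d x y)"

definition dist_set :: "('n \<Rightarrow> ereal) set \<Rightarrow> ('n \<Rightarrow> ereal) set \<Rightarrow> ereal" where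
  "dist_set A B = (SUP x\<in>A. dist_pt x B)"

definition tspan :: "('p::finite \<Rightarrow> 'n \<Rightarrow> ereal) \<Rightarrow> ('n \<Rightarrow> ereal) set" where
  "tspan v = {x. \<exists>\<alpha>. (\<forall>k. \<alpha> k \<noteq> \<infinity>) \<and> x = (\<lambda>j. SUP k. \<alpha> k + v k j)}"

text \<open>The operator T (V_ik = v k i).\<close>
definition opT :: "('p::finite \<Rightarrow> 'n::finite \<Rightarrow> ereal) \<Rightarrow> ('n \<Rightarrow> ereal) \<Rightarrow> ('n \<Rightarrow> ereal)" where
  "opT v x = (\<lambda>i. INF k\<in>{k. v k i \<noteq> -\<infinity>}. - v k i + (SUP j\<in>{j. j \<noteq> i}. v k j + x j))"

definition specT :: "(('n \<Rightarrow> ereal) \<Rightarrow> ('n \<Rightarrow> ereal)) \<Rightarrow> ereal" where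
  "specT T = Sup {l. l \<noteq> \<infinity> \<and> (\<exists>u\<in>rmax. u \<noteq> (\<lambda>_. -\<infinity>) \<and> T u = (\<lambda>i. l + u i))}"

end

theory Submission
  imports Defs
begin

(*
  T_i(b) is the minimum over the generators of -v_ki + max_{j <> i} (v_kj + b_j), and the distance
  from v_k to H_b satisfies v_ki + b_i <= dist_H(v_k, H_b) + max_{j <> i} (v_kj + b_j), with
  equality when b = a is real and v_k lies in the sector S_i(a): lowering the i-th coordinate of
  v_k until the maximum is attained twice gives a nearest point of H_a. Hence
  -dist_H(V, H_b) + b <= T(b) for every b, and T(a) = -dist_H(V, H_a) + a holds exactly when every
  sector S_i(a) contains a generator at maximal distance from H_a.

  T is monotone and commutes with adding constants, so a Collatz-Wielandt comparison bounds the
  eigenvalue of any sub-eigenvector by that of a real super-eigenvector. This identifies rho(T) and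
  shows that H_a minimises the distance to V. Translating the generators at maximal distance so that
  they touch a point x of B(-a, dist_H(V, H_a)) in their own sector keeps them below x, so x lies in
  Span(V); conversely a ball B(c, r) inside Span(V) makes -c a super-eigenvector with eigenvalue -r.
*)

lemma INF_attained_finite:
  fixes f :: "'a \<Rightarrow> 'b::complete_linorder"
  assumes "finite A" "A \<noteq> {}"
  obtains x where "x \<in> A" "(INF x\<in>A. f x) = f x"
proof -
  have "(INF x\<in>A. f x) \<in> f ` A" using assms by (simp add: cInf_eq_Min)
  then show ?thesis using that by blast
qed

lemma SUP_attained_finite:
  fixes f :: "'a \<Rightarrow> 'b::complete_linorder"
  assumes "finite A" "A \<noteq> {}"
  obtains x where "x \<in> A" "(SUP x\<in>A. f x) = f x"
proof -
  have "(SUP x\<in>A. f x) \<in> f ` A" using assms by (simp add: cSup_eq_Max)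
  then show ?thesis using that by blast
qed

lemma INF_finite_ereal_add_const:
  fixes f :: "'a \<Rightarrow> ereal"
  assumes "finite A"
  shows "(INF k\<in>A. ereal s + f k) = ereal s + (INF k\<in>A. f k)"
proof (cases "A = {}")
  case False
  have "mono (\<lambda>y. ereal s + y)" by (simp add: mono_def add_left_mono)
  then show ?thesis
    using assms False by (simp add: cInf_eq_Min mono_Min_commute image_image)
qed (simp add: top_ereal_def)

lemma SUP_finite_ereal_add_const:
  fixes f :: "'a \<Rightarrow> ereal"
  assumes "finite A"
  shows "(SUP k\<in>A. ereal s + f k) = ereal s + (SUP k\<in>A. f k)"
proof (cases "A = {}")
  case False
  have "mono (\<lambda>y. ereal s + y)" by (simp add: mono_def add_left_mono)
  then show ?thesis
    using assms False by (simp add: cSup_eq_Max mono_Max_commute image_image)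
qed (simp add: bot_ereal_def)

lemma ereal_le_Inf_add:
  fixes c S :: ereal
  assumes "\<And>w. w \<in> W \<Longrightarrow> c \<le> w + S"
  shows "c \<le> Inf W + S"
proof (cases S)
  case (real s)
  have "c - ereal s \<le> Inf W"
    using assms real by (intro Inf_greatest) (simp add: ereal_minus_le)
  then show ?thesis using real by (simp add: ereal_minus_le)
next
  case MInf
  show ?thesis
  proof (cases "c = -\<infinity>")
    case False
    then have "w = \<infinity>" if "w \<in> W" for w
      using assms[OF that] MInf by (cases w) auto
    then have "Inf W = \<infinity>" by (simp add: top_ereal_def[symmetric] Inf_top_conv)
    then show ?thesis by simp
  qed simp
qed simp

lemma SUP_add_rmax_neq_PInf:
  fixes x b :: "'n \<Rightarrow> ereal"
  assumes "x \<in> rmax" "b \<in> rmax" "finite A"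
  shows "(SUP j\<in>A. x j + b j) \<noteq> \<infinity>"
proof (cases "A = {}")
  case False
  then obtain j where "j \<in> A" "(SUP j\<in>A. x j + b j) = x j + b j"
    by (rule SUP_attained_finite[OF \<open>finite A\<close>])
  moreover have "x j \<noteq> \<infinity>" "b j \<noteq> \<infinity>" using assms unfolding rmax_def by auto
  ultimately show ?thesis by simp
qed (simp add: bot_ereal_def)

lemma rmax_coord_realE:
  assumes "x \<in> rmax" "x i \<noteq> -\<infinity>"
  obtains r where "x i = ereal r"
  using assms unfolding rmax_def by (cases "x i") auto

lemma sector_coord_nonbot:
  assumes "x \<in> sector i a" "x j \<noteq> -\<infinity>"
  shows "x i \<noteq> -\<infinity>"
  using assms unfolding sector_def by (cases "x j") auto

lemma sector_iff_SUP_le: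
  assumes "x \<in> rmax"
  shows "x \<in> sector i a \<longleftrightarrow> (SUP j\<in>{j. j \<noteq> i}. x j + ereal (a j)) \<le> x i + ereal (a i)"
proof
  assume "x \<in> sector i a"
  then show "(SUP j\<in>{j. j \<noteq> i}. x j + ereal (a j)) \<le> x i + ereal (a i)"
    unfolding sector_def by (auto intro: SUP_least)
next
  assume le: "(SUP j\<in>{j. j \<noteq> i}. x j + ereal (a j)) \<le> x i + ereal (a i)"
  have "x j + ereal (a j) \<le> x i + ereal (a i)" for j
  proof (cases "j = i")
    case False
    then have "x j + ereal (a j) \<le> (SUP j\<in>{j. j \<noteq> i}. x j + ereal (a j))"
      by (intro SUP_upper) simp
    then show ?thesis using le by (rule order_trans)
  qed simp
  with assms show "x \<in> sector i a" unfolding sector_def by blast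
qed

lemma hilbert_d_le:
  assumes "\<And>j. ereal m + y j \<le> x j" "\<And>j. x j \<le> ereal l + y j"
  shows "hilbert_d x y \<le> ereal (l - m)"
  unfolding hilbert_d_def using assms by (intro Inf_lower) blast

lemma hilbert_d_nonneg:
  assumes "x j = ereal r"
  shows "0 \<le> hilbert_d x y"
  unfolding hilbert_d_def
proof (rule Inf_greatest, clarify)
  fix l m :: real
  assume "\<forall>j. ereal m + y j \<le> x j \<and> x j \<le> ereal l + y j"
  then have "ereal m + y j \<le> ereal r" "ereal r \<le> ereal l + y j"
    using assms by (metis (no_types))+
  then show "0 \<le> ereal (l - m)" by (cases "y j") auto
qed

lemma hilbert_d_real_leD:
  assumes "hilbert_d (\<lambda>i. ereal (c i)) x \<le> ereal d"
  obtains xr where "x = (\<lambda>i. ereal (xr i))" "\<And>i j. (c i - xr i) - (c j - xr j) \<le> d"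
proof -
  let ?W = "{ereal (l - m) | l m. \<forall>j. ereal m + x j \<le> ereal (c j) \<and> ereal (c j) \<le> ereal l + x j}"
  have "?W \<noteq> {}"
  proof
    assume "?W = {}"
    then show False using assms unfolding hilbert_d_def \<open>?W = {}\<close> by (simp add: top_ereal_def)
  qed
  then obtain l m where "\<forall>j. ereal m + x j \<le> ereal (c j) \<and> ereal (c j) \<le> ereal l + x j"
    by blast
  then have "\<bar>x j\<bar> \<noteq> \<infinity>" for j by (cases "x j") (auto dest: spec[of _ j])
  define xr where "xr i = real_of_ereal (x i)" for i
  have x: "x = (\<lambda>i. ereal (xr i))"
    using \<open>\<And>j. \<bar>x j\<bar> \<noteq> \<infinity>\<close> by (simp add: xr_def ereal_real')
  have "ereal ((c i - xr i) - (c j - xr j)) \<le> hilbert_d (\<lambda>i. ereal (c i)) x" for i j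
    unfolding hilbert_d_def
  proof (rule Inf_greatest, clarify)
    fix l m :: real
    assume lm: "\<forall>j. ereal m + x j \<le> ereal (c j) \<and> ereal (c j) \<le> ereal l + x j"
    have "c i \<le> l + xr i" "m + xr j \<le> c j"
      using lm[rule_format, of i] lm[rule_format, of j] by (simp_all add: x)
    then show "ereal ((c i - xr i) - (c j - xr j)) \<le> ereal (l - m)"
      by simp
  qed
  then have "(c i - xr i) - (c j - xr j) \<le> d" for i j
    using order_trans[OF _ assms] by (metis ereal_less_eq(3))
  with x show ?thesis by (rule that)
qed

lemma tropH_coordinate_bound:
  assumes "y \<in> tropH b" and "\<forall>j. ereal m + y j \<le> x j \<and> x j \<le> ereal l + y j"
  obtains j where "j \<noteq> i" "x i + b i \<le> ereal (l - m) + (x j + b j)"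
proof -
  from assms(1) obtain i1 i2 where "i1 \<noteq> i2"
    and max: "b i1 + y i1 = (SUP k. b k + y k)" "b i2 + y i2 = (SUP k. b k + y k)"
    unfolding tropH_def by blast
  then obtain j where "j \<noteq> i" and j: "b j + y j = (SUP k. b k + y k)"
    by (metis (no_types))
  have "x i + b i \<le> (ereal l + y i) + b i"
    using assms(2) by (simp add: add_right_mono)
  also have "\<dots> = ereal l + (b i + y i)" by (simp add: ac_simps)
  also have "\<dots> \<le> ereal l + (b j + y j)"
    unfolding j by (intro add_left_mono SUP_upper) simp
  also have "\<dots> = (ereal (l - m) + ereal m) + (b j + y j)"
    by simp
  also have "\<dots> = ereal (l - m) + (b j + (ereal m + y j))"
    by (simp only: ac_simps)
  also have "\<dots> \<le> ereal (l - m) + (x j + b j)"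
    using assms(2) by (simp add: add_left_mono add.commute)
  finally show ?thesis using \<open>j \<noteq> i\<close> that by blast
qed

lemma dist_pt_tropH_ge:
  fixes x b :: "'n::finite \<Rightarrow> ereal"
  shows "x i + b i \<le> dist_pt x (tropH b) + (SUP j\<in>{j. j \<noteq> i}. x j + b j)"
  unfolding dist_pt_def
proof (rule ereal_le_Inf_add, clarify)
  fix y assume y: "y \<in> tropH b"
  show "x i + b i \<le> hilbert_d x y + (SUP j\<in>{j. j \<noteq> i}. x j + b j)"
    unfolding hilbert_d_def
  proof (rule ereal_le_Inf_add, clarify)
    fix l m assume lm: "\<forall>j. ereal m + y j \<le> x j \<and> x j \<le> ereal l + y j"
    obtain j where "j \<noteq> i" "x i + b i \<le> ereal (l - m) + (x j + b j)"
      using tropH_coordinate_bound[OF y lm] by blast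
    moreover have "x j + b j \<le> (SUP j\<in>{j. j \<noteq> i}. x j + b j)"
      using \<open>j \<noteq> i\<close> by (intro SUP_upper) simp
    ultimately show "x i + b i \<le> ereal (l - m) + (SUP j\<in>{j. j \<noteq> i}. x j + b j)"
      by (meson add_left_mono order_trans)
  qed
qed

lemma lower_coord_mem_tropH:
  fixes a :: "'n::finite \<Rightarrow> real"
  assumes "x \<in> rmax" and S: "(SUP j\<in>{j. j \<noteq> i}. x j + ereal (a j)) = ereal s"
  shows "x(i := ereal (s - a i)) \<in> tropH (\<lambda>i. ereal (a i))"
proof -
  define y where "y = x(i := ereal (s - a i))"
  have "{j. j \<noteq> i} \<noteq> {}"
  proof
    assume "{j. j \<noteq> i} = {}"
    then show False using S by (simp add: bot_ereal_def)
  qed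
  then obtain j where "j \<in> {j. j \<noteq> i}"
    and "(SUP j\<in>{j. j \<noteq> i}. x j + ereal (a j)) = x j + ereal (a j)"
    by (rule SUP_attained_finite[OF finite])
  with S have "j \<noteq> i" and yj: "ereal (a j) + y j = ereal s" by (simp_all add: y_def add.commute)
  have yi: "ereal (a i) + y i = ereal s" by (simp add: y_def)
  have "ereal (a k) + y k \<le> ereal s" for k
  proof (cases "k = i")
    case False
    then have "x k + ereal (a k) \<le> ereal s" unfolding S[symmetric] by (intro SUP_upper) simp
    then show ?thesis using False unfolding y_def by (simp add: add.commute)
  qed (simp add: yi)
  then have sup: "(SUP k. ereal (a k) + y k) = ereal s"
  proof (intro antisym SUP_least)
    show "ereal s \<le> (SUP k. ereal (a k) + y k)" unfolding yi[symmetric] by (rule SUP_upper) simp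
  qed
  have "\<exists>i j. i \<noteq> j \<and> ereal (a i) + y i = (SUP k. ereal (a k) + y k)
      \<and> ereal (a j) + y j = (SUP k. ereal (a k) + y k)"
    unfolding sup using \<open>j \<noteq> i\<close> yi yj by (intro exI[of _ i] exI[of _ j]) simp
  moreover have "y \<in> rmax" using assms(1) unfolding y_def rmax_def by auto
  ultimately show ?thesis unfolding tropH_def y_def[symmetric] by blast
qed

lemma dist_pt_tropH_sector:
  fixes a :: "'n::finite \<Rightarrow> real"
  assumes sec: "x \<in> sector i a" and xi: "x i = ereal xi"
    and S: "(SUP j\<in>{j. j \<noteq> i}. x j + ereal (a j)) = ereal s"
  shows "dist_pt x (tropH (\<lambda>i. ereal (a i))) = ereal (xi + a i - s)"
proof (rule antisym)
  have x: "x \<in> rmax" using sec unfolding sector_def by blast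
  with sec have "s \<le> xi + a i" using xi S by (simp add: sector_iff_SUP_le)
  define y where "y = x(i := ereal (s - a i))"
  have "y \<in> tropH (\<lambda>i. ereal (a i))" unfolding y_def using x S by (rule lower_coord_mem_tropH)
  then have "dist_pt x (tropH (\<lambda>i. ereal (a i))) \<le> hilbert_d x y"
    unfolding dist_pt_def by (rule INF_lower)
  also have "hilbert_d x y \<le> ereal ((xi + a i - s) - 0)"
  proof (rule hilbert_d_le)
    fix k
    show "ereal 0 + y k \<le> x k" using \<open>s \<le> xi + a i\<close> xi by (simp add: y_def)
    have "x k \<noteq> \<infinity>" using x unfolding rmax_def by auto
    then show "x k \<le> ereal (xi + a i - s) + y k"
      using \<open>s \<le> xi + a i\<close> xi by (cases "k = i"; cases "x k") (simp_all add: y_def)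
  qed
  finally show "dist_pt x (tropH (\<lambda>i. ereal (a i))) \<le> ereal (xi + a i - s)" by simp
next
  show "ereal (xi + a i - s) \<le> dist_pt x (tropH (\<lambda>i. ereal (a i)))"
    using dist_pt_tropH_ge[of x i "\<lambda>i. ereal (a i)"] xi S
    by (cases "dist_pt x (tropH (\<lambda>i. ereal (a i)))") auto
qed

lemma opT_mono:
  assumes "\<And>j. x j \<le> y j"
  shows "opT v x i \<le> opT v y i"
  unfolding opT_def using assms
  by (intro INF_superset_mono order_refl add_left_mono SUP_subset_mono add_left_mono)

lemma opT_add_const:
  "opT v (\<lambda>j. ereal s + x j) i = ereal s + opT v x i"
proof -
  have "- v k i + (SUP j\<in>{j. j \<noteq> i}. v k j + (ereal s + x j))
      = ereal s + (- v k i + (SUP j\<in>{j. j \<noteq> i}. v k j + x j))" for k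
    using SUP_finite_ereal_add_const[of "{j. j \<noteq> i}" s "\<lambda>j. v k j + x j"]
    by (simp add: ac_simps)
  then show ?thesis
    unfolding opT_def by (simp add: INF_finite_ereal_add_const)
qed

lemma collatz_wielandt_le:
  fixes u :: "'n::finite \<Rightarrow> ereal" and a :: "'n \<Rightarrow> real"
  assumes u: "u \<in> rmax" "u j \<noteq> -\<infinity>"
    and sub: "\<And>i. l1 + u i \<le> opT v u i"
    and super: "\<And>i. opT v (\<lambda>i. ereal (a i)) i \<le> l2 + ereal (a i)"
  shows "l1 \<le> l2"
proof -
  obtain i0 where i0: "(SUP i. u i - ereal (a i)) = u i0 - ereal (a i0)"
    using SUP_attained_finite[of UNIV "\<lambda>i. u i - ereal (a i)"] by auto
  have max: "u i - ereal (a i) \<le> u i0 - ereal (a i0)" for i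
    unfolding i0[symmetric] by (rule SUP_upper) simp
  have "u i0 \<noteq> -\<infinity>" using max[of j] u(2) by (cases "u j") auto
  moreover have "u i0 \<noteq> \<infinity>" using u(1) unfolding rmax_def by auto
  ultimately obtain s where s: "u i0 = ereal (s + a i0)"
    using that[of "real_of_ereal (u i0) - a i0"] by (cases "u i0") auto
  have "u i \<le> ereal s + ereal (a i)" for i
    using max[of i] s by (cases "u i") auto
  then have "opT v u i0 \<le> opT v (\<lambda>i. ereal s + ereal (a i)) i0"
    by (rule opT_mono)
  with sub have "l1 + u i0 \<le> opT v (\<lambda>i. ereal s + ereal (a i)) i0"
    by (rule order_trans)
  also have "\<dots> = ereal s + opT v (\<lambda>i. ereal (a i)) i0"
    by (rule opT_add_const)
  also have "\<dots> \<le> ereal s + (l2 + ereal (a i0))"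
    using super by (rule add_left_mono)
  also have "\<dots> = l2 + u i0"
    using s by (simp add: ac_simps)
  finally show ?thesis
    using s by (simp add: ereal_add_le_add_iff2)
qed

lemma specT_opT_eqI:
  fixes a :: "'n::finite \<Rightarrow> real"
  assumes eigen: "opT v (\<lambda>i. ereal (a i)) = (\<lambda>i. l + ereal (a i))" and "l \<noteq> \<infinity>"
  shows "specT (opT v) = l"
  unfolding specT_def
proof (rule antisym)
  show "Sup {l. l \<noteq> \<infinity> \<and> (\<exists>u\<in>rmax. u \<noteq> (\<lambda>_. - \<infinity>) \<and> opT v u = (\<lambda>i. l + u i))} \<le> l"
  proof (rule Sup_least, clarify)
    fix l' u assume u: "u \<in> rmax" "u \<noteq> (\<lambda>_. - \<infinity>)" "opT v u = (\<lambda>i. l' + u i)"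
    then obtain j where "u j \<noteq> -\<infinity>" by auto
    show "l' \<le> l"
      by (rule collatz_wielandt_le[where v = v and a = a, OF u(1) \<open>u j \<noteq> -\<infinity>\<close>])
        (simp_all add: u(3) eigen)
  qed
  have "(\<lambda>i. ereal (a i)) \<in> rmax" "(\<lambda>i. ereal (a i)) \<noteq> (\<lambda>_. - \<infinity>)"
    by (auto simp: rmax_def fun_eq_iff)
  then show "l \<le> Sup {l. l \<noteq> \<infinity> \<and> (\<exists>u\<in>rmax. u \<noteq> (\<lambda>_. - \<infinity>) \<and> opT v u = (\<lambda>i. l + u i))}"
    using eigen \<open>l \<noteq> \<infinity>\<close> by (intro Sup_upper) blast
qed

lemma sector_translate_le:
  fixes a :: "'n::finite \<Rightarrow> real"
  assumes sec: "w \<in> sector i a" and wi: "w i = ereal r" and x: "x \<in> rmax"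
    and dx: "hilbert_d (\<lambda>i. ereal (- a i)) x \<le> dist_pt w (tropH (\<lambda>i. ereal (a i)))"
  shows "(x i - ereal r) + w j \<le> x j"
proof -
  have "x i \<noteq> \<infinity>" using x unfolding rmax_def by auto
  consider "j = i" | "w j = -\<infinity>" | wj where "j \<noteq> i" "w j = ereal wj"
    using sec unfolding sector_def rmax_def by (cases "w j") auto
  then show ?thesis
  proof cases
    case 1
    then show ?thesis using wi \<open>x i \<noteq> \<infinity>\<close> by (cases "x i") auto
  next
    case 2
    then show ?thesis using \<open>x i \<noteq> \<infinity>\<close> by (cases "x i") auto
  next
    case 3
    define S where "S = (SUP j\<in>{j. j \<noteq> i}. w j + ereal (a j))"
    have "w j + ereal (a j) \<le> S"
      unfolding S_def using 3 by (intro SUP_upper) simp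
    moreover have "S \<noteq> \<infinity>"
      unfolding S_def using sec by (intro SUP_add_rmax_neq_PInf) (auto simp: sector_def rmax_def)
    ultimately obtain s where s: "S = ereal s" "wj + a j \<le> s" using 3 by (cases S) auto
    have "dist_pt w (tropH (\<lambda>i. ereal (a i))) = ereal (r + a i - s)"
      using dist_pt_tropH_sector[OF sec wi] s unfolding S_def by simp
    with dx have "hilbert_d (\<lambda>i. ereal (- a i)) x \<le> ereal (r + a i - s)" by simp
    then obtain xr where xr: "x = (\<lambda>i. ereal (xr i))"
      and bound: "\<And>p q. (- a p - xr p) - (- a q - xr q) \<le> r + a i - s"
      by (rule hilbert_d_real_leD) blast
    show ?thesis using bound[of j i] xr s 3 by simp
  qed
qed

locale tropical_generators =
  fixes v :: "'p::finite \<Rightarrow> 'n::finite \<Rightarrow> ereal"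
  assumes generator_rmax: "v k \<in> rmax"
    and generator_nonbot: "\<exists>i. v k i \<noteq> -\<infinity>"
    and row_nonbot: "\<exists>k. v k i \<noteq> -\<infinity>"
begin

lemma sector_generator_realE:
  assumes "v k \<in> sector i a"
  obtains r where "v k i = ereal r"
proof -
  obtain j where "v k j \<noteq> -\<infinity>" using generator_nonbot by blast
  with assms have "v k i \<noteq> -\<infinity>" by (rule sector_coord_nonbot)
  with generator_rmax show ?thesis by (rule rmax_coord_realE) (rule that)
qed

lemma dist_set_nonneg: "0 \<le> dist_set (range v) B"
proof -
  obtain i where "v k i \<noteq> -\<infinity>" using generator_nonbot by blast
  with generator_rmax obtain r where "v k i = ereal r" by (rule rmax_coord_realE)
  then have "0 \<le> dist_pt (v k) B"
    unfolding dist_pt_def by (intro INF_greatest hilbert_d_nonneg)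
  also have "\<dots> \<le> dist_set (range v) B"
    unfolding dist_set_def by (rule SUP_upper) simp
  finally show ?thesis .
qed

lemma dist_set_attained:
  obtains k where "dist_set (range v) B = dist_pt (v k) B"
proof -
  obtain k where "k \<in> UNIV" "(SUP k. dist_pt (v k) B) = dist_pt (v k) B"
    by (rule SUP_attained_finite[OF finite UNIV_not_empty])
  then show ?thesis using that unfolding dist_set_def image_image by blast
qed

lemma neg_dist_set_le_opT:
  assumes b: "b \<in> rmax"
  shows "- dist_set (range v) (tropH b) + b i \<le> opT v b i"
  unfolding opT_def
proof (rule INF_greatest, clarify)
  fix k assume "v k i \<noteq> -\<infinity>"
  with generator_rmax obtain r where r: "v k i = ereal r" by (rule rmax_coord_realE)
  define \<delta> where "\<delta> = dist_set (range v) (tropH b)"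
  define S where "S = (SUP j\<in>{j. j \<noteq> i}. v k j + b j)"
  have "0 \<le> \<delta>" unfolding \<delta>_def by (rule dist_set_nonneg)
  have "S \<noteq> \<infinity>" "b i \<noteq> \<infinity>"
    using SUP_add_rmax_neq_PInf[OF generator_rmax b] b unfolding S_def rmax_def by auto
  have "v k i + b i \<le> dist_pt (v k) (tropH b) + S"
    unfolding S_def by (rule dist_pt_tropH_ge)
  also have "\<dots> \<le> \<delta> + S"
    unfolding \<delta>_def dist_set_def by (intro add_right_mono SUP_upper) simp
  finally show "- dist_set (range v) (tropH b) + b i \<le> - v k i + S"
    using \<open>0 \<le> \<delta>\<close> \<open>S \<noteq> \<infinity>\<close> \<open>b i \<noteq> \<infinity>\<close> r unfolding \<delta>_def[symmetric]
    by (cases \<delta>; cases S; cases "b i") auto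
qed

lemma opT_le_neg_dist_pt_sector:
  assumes sec: "v k \<in> sector i a"
  shows "opT v (\<lambda>i. ereal (a i)) i \<le> - dist_pt (v k) (tropH (\<lambda>i. ereal (a i))) + ereal (a i)"
proof -
  obtain r where r: "v k i = ereal r" using sec by (rule sector_generator_realE)
  define S where "S = (SUP j\<in>{j. j \<noteq> i}. v k j + ereal (a j))"
  have "opT v (\<lambda>i. ereal (a i)) i \<le> - v k i + S"
    unfolding opT_def S_def using r by (intro INF_lower) simp
  also have "\<dots> \<le> - dist_pt (v k) (tropH (\<lambda>i. ereal (a i))) + ereal (a i)"
  proof (cases S)
    case (real s)
    then show ?thesis
      using dist_pt_tropH_sector[OF sec r] r unfolding S_def by simp
  next
    case PInf
    moreover have "S \<noteq> \<infinity>"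
      unfolding S_def by (intro SUP_add_rmax_neq_PInf generator_rmax) (simp_all add: rmax_def)
    ultimately show ?thesis by simp
  qed (simp add: r)
  finally show ?thesis .
qed

lemma eigen_coord_sectorE:
  fixes a :: "'n \<Rightarrow> real"
  assumes eigen: "opT v (\<lambda>i. ereal (a i)) i
      = - dist_set (range v) (tropH (\<lambda>i. ereal (a i))) + ereal (a i)"
  obtains k where "v k \<in> sector i a"
    and "dist_pt (v k) (tropH (\<lambda>i. ereal (a i))) = dist_set (range v) (tropH (\<lambda>i. ereal (a i)))"
proof -
  define \<delta> where "\<delta> = dist_set (range v) (tropH (\<lambda>i. ereal (a i)))"
  define t where "t k = - v k i + (SUP j\<in>{j. j \<noteq> i}. v k j + ereal (a j))" for k
  have "{k. v k i \<noteq> -\<infinity>} \<noteq> {}" using row_nonbot by auto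
  then obtain k where "k \<in> {k. v k i \<noteq> -\<infinity>}" and "(INF k\<in>{k. v k i \<noteq> -\<infinity>}. t k) = t k"
    by (rule INF_attained_finite[OF finite])
  with eigen have "v k i \<noteq> -\<infinity>" and t: "t k = - \<delta> + ereal (a i)"
    unfolding opT_def t_def[symmetric] \<delta>_def by simp_all
  from generator_rmax this(1) obtain r where r: "v k i = ereal r" by (rule rmax_coord_realE)
  define S where "S = (SUP j\<in>{j. j \<noteq> i}. v k j + ereal (a j))"
  define d where "d = dist_pt (v k) (tropH (\<lambda>i. ereal (a i)))"
  have "0 \<le> \<delta>" unfolding \<delta>_def by (rule dist_set_nonneg)
  have "d \<le> \<delta>" unfolding d_def \<delta>_def dist_set_def by (rule SUP_upper) simp
  have ge: "ereal r + ereal (a i) \<le> d + S"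
    using dist_pt_tropH_ge[of "v k" i "\<lambda>i. ereal (a i)"] r unfolding d_def S_def by simp
  have eq: "- ereal r + S = - \<delta> + ereal (a i)" using t r unfolding t_def S_def by simp
  have "S \<le> v k i + ereal (a i) \<and> d = \<delta>"
  proof (cases S)
    case MInf
    then have "\<delta> = \<infinity>" using eq \<open>0 \<le> \<delta>\<close> by (cases \<delta>) auto
    moreover have "d = \<infinity>" using ge MInf by (cases d) auto
    ultimately show ?thesis using MInf by simp
  next
    case (real s)
    then have "\<delta> = ereal (r + a i - s)" using eq \<open>0 \<le> \<delta>\<close> by (cases \<delta>) auto
    then show ?thesis using ge \<open>d \<le> \<delta>\<close> \<open>0 \<le> \<delta>\<close> real r by (cases d) auto
  next
    case PInf
    moreover have "S \<noteq> \<infinity>"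
      unfolding S_def by (intro SUP_add_rmax_neq_PInf generator_rmax) (simp_all add: rmax_def)
    ultimately show ?thesis by simp
  qed
  then show ?thesis
    using that sector_iff_SUP_le[OF generator_rmax] unfolding S_def d_def \<delta>_def by blast
qed

lemma eigen_iff_sectors:
  fixes a :: "'n \<Rightarrow> real"
  shows "opT v (\<lambda>i. ereal (a i))
        = (\<lambda>i. - dist_set (range v) (tropH (\<lambda>i. ereal (a i))) + ereal (a i))
    \<longleftrightarrow> (\<forall>i. \<exists>k. v k \<in> sector i a \<and>
          dist_pt (v k) (tropH (\<lambda>i. ereal (a i))) = dist_set (range v) (tropH (\<lambda>i. ereal (a i))))"
proof
  assume "opT v (\<lambda>i. ereal (a i))
        = (\<lambda>i. - dist_set (range v) (tropH (\<lambda>i. ereal (a i))) + ereal (a i))"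
  then show "\<forall>i. \<exists>k. v k \<in> sector i a \<and>
          dist_pt (v k) (tropH (\<lambda>i. ereal (a i))) = dist_set (range v) (tropH (\<lambda>i. ereal (a i)))"
    by (metis eigen_coord_sectorE)
next
  assume sectors: "\<forall>i. \<exists>k. v k \<in> sector i a \<and>
          dist_pt (v k) (tropH (\<lambda>i. ereal (a i))) = dist_set (range v) (tropH (\<lambda>i. ereal (a i)))"
  show "opT v (\<lambda>i. ereal (a i))
        = (\<lambda>i. - dist_set (range v) (tropH (\<lambda>i. ereal (a i))) + ereal (a i))"
  proof
    fix i
    obtain k where "v k \<in> sector i a"
      and "dist_pt (v k) (tropH (\<lambda>i. ereal (a i))) = dist_set (range v) (tropH (\<lambda>i. ereal (a i)))"
      using sectors by blast
    then have "opT v (\<lambda>i. ereal (a i)) i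
        \<le> - dist_set (range v) (tropH (\<lambda>i. ereal (a i))) + ereal (a i)"
      using opT_le_neg_dist_pt_sector by metis
    moreover have "- dist_set (range v) (tropH (\<lambda>i. ereal (a i))) + ereal (a i)
        \<le> opT v (\<lambda>i. ereal (a i)) i"
      by (rule neg_dist_set_le_opT) (simp add: rmax_def)
    ultimately show "opT v (\<lambda>i. ereal (a i)) i
        = - dist_set (range v) (tropH (\<lambda>i. ereal (a i))) + ereal (a i)"
      by (rule antisym)
  qed
qed

lemma real_eigenvalue_eq_neg_dist_set:
  fixes a :: "'n \<Rightarrow> real"
  assumes eigen: "opT v (\<lambda>i. ereal (a i)) = (\<lambda>i. l + ereal (a i))"
  shows "l = - dist_set (range v) (tropH (\<lambda>i. ereal (a i)))"
proof (rule antisym)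
  obtain k where k: "dist_set (range v) (tropH (\<lambda>i. ereal (a i)))
      = dist_pt (v k) (tropH (\<lambda>i. ereal (a i)))"
    by (rule dist_set_attained)
  obtain i where "i \<in> UNIV" and i: "(SUP j. v k j + ereal (a j)) = v k i + ereal (a i)"
    by (rule SUP_attained_finite[OF finite UNIV_not_empty])
  have "v k j + ereal (a j) \<le> v k i + ereal (a i)" for j
    unfolding i[symmetric] by (rule SUP_upper) simp
  then have "v k \<in> sector i a" using generator_rmax unfolding sector_def by blast
  then have "l + ereal (a i) \<le> - dist_set (range v) (tropH (\<lambda>i. ereal (a i))) + ereal (a i)"
    using opT_le_neg_dist_pt_sector[of k i a] eigen k by simp
  then show "l \<le> - dist_set (range v) (tropH (\<lambda>i. ereal (a i)))"
    by (simp add: ereal_add_le_add_iff2)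
next
  have "- dist_set (range v) (tropH (\<lambda>i. ereal (a i))) + ereal (a i) \<le> l + ereal (a i)" for i
    using neg_dist_set_le_opT[of "\<lambda>i. ereal (a i)" i] eigen by (simp add: rmax_def)
  then show "- dist_set (range v) (tropH (\<lambda>i. ereal (a i))) \<le> l"
    by (simp add: ereal_add_le_add_iff2)
qed

lemma neg_dist_set_tropH_le:
  fixes a :: "'n \<Rightarrow> real"
  assumes "b \<in> rmax" "b \<noteq> (\<lambda>_. -\<infinity>)"
    and super: "\<And>i. opT v (\<lambda>i. ereal (a i)) i \<le> l + ereal (a i)"
  shows "- dist_set (range v) (tropH b) \<le> l"
proof -
  obtain j where "b j \<noteq> -\<infinity>" using assms(2) by auto
  with assms(1) show ?thesis
    using neg_dist_set_le_opT[OF assms(1)] super by (rule collatz_wielandt_le)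
qed

lemma tspan_memI:
  assumes x: "x \<in> rmax"
    and cover: "\<And>i. \<exists>k \<beta>. (\<forall>j. \<beta> + v k j \<le> x j) \<and> x i \<le> \<beta> + v k i"
  shows "x \<in> tspan v"
proof -
  \<comment> \<open>\<open>\<alpha> k\<close> is the largest scalar with \<open>\<alpha> k + v k \<le> x\<close>; entries \<open>v k j = -\<infinity>\<close> impose no
    constraint since \<open>x j - -\<infinity> = \<infinity>\<close> in \<open>ereal\<close>.\<close>
  define \<alpha> where "\<alpha> k = (INF j. x j - v k j)" for k
  have x_fin: "x j \<noteq> \<infinity>" and v_fin: "v k j \<noteq> \<infinity>" for k j
    using x generator_rmax unfolding rmax_def by auto
  have \<alpha>_greatest: "\<beta> \<le> \<alpha> k" if "\<forall>j. \<beta> + v k j \<le> x j" for \<beta> k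
    unfolding \<alpha>_def
  proof (rule INF_greatest)
    fix j
    show "\<beta> \<le> x j - v k j"
      using that[rule_format, of j] x_fin[of j] v_fin[of k j]
      by (cases "v k j"; cases "x j"; cases \<beta>) auto
  qed
  have \<alpha>_fin: "\<alpha> k \<noteq> \<infinity>" for k
  proof -
    obtain j where "v k j \<noteq> -\<infinity>" using generator_nonbot by blast
    then have "x j - v k j \<noteq> \<infinity>" using x_fin[of j] v_fin[of k j] by (cases "v k j"; cases "x j") auto
    moreover have "\<alpha> k \<le> x j - v k j" unfolding \<alpha>_def by (rule INF_lower) simp
    ultimately show ?thesis by auto
  qed
  have \<alpha>_below: "\<alpha> k + v k j \<le> x j" for k j
  proof -
    have "\<alpha> k \<le> x j - v k j" unfolding \<alpha>_def by (rule INF_lower) simp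
    then show ?thesis using \<alpha>_fin[of k] x_fin[of j] v_fin[of k j]
      by (cases "v k j"; cases "x j"; cases "\<alpha> k") auto
  qed
  have "x j = (SUP k. \<alpha> k + v k j)" for j
  proof (rule antisym)
    obtain k \<beta> where "\<forall>j. \<beta> + v k j \<le> x j" "x j \<le> \<beta> + v k j" using cover by blast
    then have "x j \<le> \<alpha> k + v k j" by (meson \<alpha>_greatest add_right_mono order_trans)
    also have "\<dots> \<le> (SUP k. \<alpha> k + v k j)" by (rule SUP_upper) simp
    finally show "x j \<le> (SUP k. \<alpha> k + v k j)" .
    show "(SUP k. \<alpha> k + v k j) \<le> x j" by (rule SUP_least) (rule \<alpha>_below)
  qed
  then show ?thesis unfolding tspan_def using \<alpha>_fin by blast
qed

lemma hball_subset_tspan: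
  fixes a :: "'n \<Rightarrow> real"
  assumes sectors: "\<And>i. \<exists>k. v k \<in> sector i a \<and> dist_pt (v k) (tropH (\<lambda>i. ereal (a i))) = \<delta>"
  shows "hball (\<lambda>i. - a i) \<delta> \<subseteq> tspan v"
proof
  fix x assume "x \<in> hball (\<lambda>i. - a i) \<delta>"
  then have x: "x \<in> rmax" and dx: "hilbert_d (\<lambda>i. ereal (- a i)) x \<le> \<delta>"
    unfolding hball_def by auto
  show "x \<in> tspan v"
  proof (rule tspan_memI[OF x])
    fix i
    obtain k where sec: "v k \<in> sector i a" and dk: "dist_pt (v k) (tropH (\<lambda>i. ereal (a i))) = \<delta>"
      using sectors by blast
    obtain r where r: "v k i = ereal r" using sec by (rule sector_generator_realE)
    have "(x i - ereal r) + v k j \<le> x j" for j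
      using sector_translate_le[OF sec r x] dx dk by simp
    moreover have "x i \<le> (x i - ereal r) + v k i"
      using r x unfolding rmax_def by (cases "x i") auto
    ultimately show "\<exists>k \<beta>. (\<forall>j. \<beta> + v k j \<le> x j) \<and> x i \<le> \<beta> + v k i" by blast
  qed
qed

lemma opT_le_of_hball_subset_tspan:
  assumes sub: "hball c (ereal r) \<subseteq> tspan v" and "0 \<le> r"
  shows "opT v (\<lambda>i. ereal (- c i)) i \<le> ereal (- r) + ereal (- c i)"
proof -
  define x where "x j = ereal (c j + (if j = i then r else 0))" for j
  have "hilbert_d (\<lambda>i. ereal (c i)) x \<le> ereal (0 - (- r))"
    by (rule hilbert_d_le) (use \<open>0 \<le> r\<close> in \<open>simp_all add: x_def\<close>)
  then have "x \<in> hball c (ereal r)" unfolding hball_def rmax_def x_def by simp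
  with sub obtain \<alpha> where \<alpha>: "\<forall>k. \<alpha> k \<noteq> \<infinity>" and x_span: "x = (\<lambda>j. SUP k. \<alpha> k + v k j)"
    unfolding tspan_def by blast
  have x_eq: "(SUP k. \<alpha> k + v k j) = x j" for j by (simp add: x_span)
  obtain k where "k \<in> UNIV" and k: "(SUP k. \<alpha> k + v k i) = \<alpha> k + v k i"
    by (rule SUP_attained_finite[OF finite UNIV_not_empty])
  have ki: "\<alpha> k + v k i = ereal (c i + r)"
    using x_eq[of i] k by (simp add: x_def)
  moreover have "v k i \<noteq> \<infinity>" using generator_rmax unfolding rmax_def by auto
  ultimately obtain b w where bw: "\<alpha> k = ereal b" "v k i = ereal w" "b + w = c i + r"
    using \<alpha> by (cases "\<alpha> k"; cases "v k i") auto
  have below: "v k j + ereal (- c j) \<le> ereal (- b)" if "j \<noteq> i" for j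
  proof -
    have "\<alpha> k + v k j \<le> (SUP k. \<alpha> k + v k j)" by (rule SUP_upper) simp
    also have "\<dots> = ereal (c j)" using x_eq[of j] that by (simp add: x_def)
    finally show ?thesis using bw by (cases "v k j") auto
  qed
  have "opT v (\<lambda>i. ereal (- c i)) i \<le> - v k i + (SUP j\<in>{j. j \<noteq> i}. v k j + ereal (- c j))"
    unfolding opT_def using bw by (intro INF_lower) simp
  also have "\<dots> \<le> - v k i + ereal (- b)"
    using below by (intro add_left_mono SUP_least) simp
  also have "\<dots> = ereal (- r) + ereal (- c i)" using bw by simp
  finally show ?thesis .
qed

lemma hball_subset_tspan_radius_le:
  fixes a :: "'n \<Rightarrow> real"
  assumes sub: "hball c (ereal r) \<subseteq> tspan v"
  shows "ereal r \<le> dist_set (range v) (tropH (\<lambda>i. ereal (a i)))"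
proof (cases "0 \<le> r")
  case True
  have "- dist_set (range v) (tropH (\<lambda>i. ereal (a i))) \<le> ereal (- r)"
  proof (rule collatz_wielandt_le)
    show "(\<lambda>i. ereal (a i)) \<in> rmax" by (simp add: rmax_def)
    show "ereal (a i) \<noteq> -\<infinity>" for i by simp
    show "- dist_set (range v) (tropH (\<lambda>i. ereal (a i))) + ereal (a i) \<le> opT v (\<lambda>i. ereal (a i)) i"
      for i by (rule neg_dist_set_le_opT) (simp add: rmax_def)
    show "opT v (\<lambda>i. ereal (- c i)) i \<le> ereal (- r) + ereal (- c i)" for i
      using sub True by (rule opT_le_of_hball_subset_tspan)
  qed
  then show ?thesis by (simp add: ereal_uminus_le_reorder)
next
  case False
  then have "ereal r \<le> 0" by simp
  also have "0 \<le> dist_set (range v) (tropH (\<lambda>i. ereal (a i)))" by (rule dist_set_nonneg)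
  finally show ?thesis .
qed

end

theorem theorem4p8:
  fixes v :: "'p::finite \<Rightarrow> 'n::finite \<Rightarrow> ereal" and a :: "'n \<Rightarrow> real"
  assumes "\<forall>k. v k \<in> rmax"
    and "\<forall>k. \<exists>i. v k i \<noteq> -\<infinity>"
    and "\<forall>i. \<exists>k. v k i \<noteq> -\<infinity>"
  shows "(opT v (\<lambda>i. ereal (a i)) = (\<lambda>i. specT (opT v) + ereal (a i)) \<longleftrightarrow>
           (\<forall>i. \<exists>k. v k \<in> sector i a \<and>
              dist_pt (v k) (tropH (\<lambda>i. ereal (a i))) = dist_set (range v) (tropH (\<lambda>i. ereal (a i)))))
       \<and> (opT v (\<lambda>i. ereal (a i)) = (\<lambda>i. specT (opT v) + ereal (a i)) \<longrightarrow>
          (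
           specT (opT v) = - dist_set (range v) (tropH (\<lambda>i. ereal (a i)))
         \<and> (\<forall>b\<in>rmax. b \<noteq> (\<lambda>_. -\<infinity>) \<longrightarrow>
              dist_set (range v) (tropH (\<lambda>i. ereal (a i))) \<le> dist_set (range v) (tropH b))
         \<and> hball (\<lambda>i. - a i) (dist_set (range v) (tropH (\<lambda>i. ereal (a i)))) \<subseteq> tspan v
         \<and> (\<forall>c r. hball c (ereal r) \<subseteq> tspan v \<longrightarrow>
              ereal r \<le> dist_set (range v) (tropH (\<lambda>i. ereal (a i))))))"
proof -
  interpret tropical_generators v
    by unfold_locales (use assms in blast)+
  let ?A = "\<lambda>i. ereal (a i)"
  let ?\<delta> = "dist_set (range v) (tropH ?A)"
  have "- ?\<delta> \<noteq> \<infinity>" using dist_set_nonneg[of "tropH ?A"] by (cases ?\<delta>) auto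
  then have spec_iff: "opT v ?A = (\<lambda>i. specT (opT v) + ?A i) \<longleftrightarrow> opT v ?A = (\<lambda>i. - ?\<delta> + ?A i)"
    using real_eigenvalue_eq_neg_dist_set specT_opT_eqI by metis
  have "specT (opT v) = - ?\<delta>
      \<and> (\<forall>b\<in>rmax. b \<noteq> (\<lambda>_. -\<infinity>) \<longrightarrow> ?\<delta> \<le> dist_set (range v) (tropH b))
      \<and> hball (\<lambda>i. - a i) ?\<delta> \<subseteq> tspan v"
    if eigen: "opT v ?A = (\<lambda>i. - ?\<delta> + ?A i)"
  proof (intro conjI ballI impI)
    show "specT (opT v) = - ?\<delta>" using eigen \<open>- ?\<delta> \<noteq> \<infinity>\<close> by (rule specT_opT_eqI)
    show "?\<delta> \<le> dist_set (range v) (tropH b)" if "b \<in> rmax" "b \<noteq> (\<lambda>_. -\<infinity>)" for b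
      using neg_dist_set_tropH_le[OF that, of a "- ?\<delta>"] eigen by simp
    show "hball (\<lambda>i. - a i) ?\<delta> \<subseteq> tspan v"
      using eigen eigen_iff_sectors hball_subset_tspan by metis
  qed
  then show ?thesis
    using spec_iff eigen_iff_sectors hball_subset_tspan_radius_le by blast
qed

end
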